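(* Let $\ell\geq 1$ be an integer. For $\kappa\in\{1,\ldots,\ell+1\}$ let $A^{[\kappa]}\in M_\ell(\mathbb{R})$ be the matrix obtained from the $\ell\times(\ell+1)$ matrix with entries $\big((i-1)(\ell+1)+j\big)^{\ell-1}$ ($1\leq i\leq \ell$, $1\leq j\leq \ell+1$) by deleting its $\kappa$-th column; equivalently $(A^{[\kappa]})_{ij}=\big((i-1)(\ell+1)+r^{[\kappa]}_j\big)^{\ell-1}$ with $r^{[\kappa]}_j=j$ for $1\leq j\leq\kappa-1$ and $r^{[\kappa]}_j=j+1$ for $\kappa\leq j\leq \ell$. Then there exists a number $\sigma_\ell$ depending only on $\ell$ such that for all $\kappa\in\{1,\ldots,\ell+1\}$ \[ \det(A^{[\kappa]})=(-1)^\ell\sigma_\ell\binom{\ell}{\kappa-1}. \] *)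

theory Defs
  imports "Jordan_Normal_Form.Determinant"
begin

definition col_shift :: "nat \<Rightarrow> nat \<Rightarrow> nat" where
  "col_shift \<kappa> j = (if j \<le> \<kappa> - 1 then j else j + 1)"

text \<open>The l x l real matrix A^[kappa]; Isabelle indices i, j are 0-based, so the
  1-based row index is i+1 and the 1-based column index is j+1.\<close>
definition A_mat :: "nat \<Rightarrow> nat \<Rightarrow> real mat" where
  "A_mat l \<kappa> = mat l l (\<lambda>(i, j). real (i * (l + 1) + col_shift \<kappa> (j + 1)) ^ (l - 1))"

end

theory Submission
  imports Defs
begin

(* Put the label c + 1 into column \<kappa> - 1 of A^[\<kappa>] (whose label there is \<kappa> + 1), for
  c = 0, ..., l. The determinant is linear in that column and its entries are polynomials of
  degree l - 1 in c, so the l-th finite difference, the sum of (-1)^c (l choose c) times these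
  determinants, vanishes. Every term except c = \<kappa> - 1 and c = \<kappa> has two equal columns, and
  those two terms are det A^[\<kappa>+1] and det A^[\<kappa>] with opposite signs. Hence
  (l choose \<kappa>-1) det A^[\<kappa>+1] = (l choose \<kappa>) det A^[\<kappa>], so det A^[\<kappa>] is proportional
  to (l choose \<kappa>-1). *)

lemma alternating_binomial_sum_Suc:
  fixes g :: "nat \<Rightarrow> 'a::comm_ring_1"
  shows "(\<Sum>c\<le>Suc n. (-1)^c * of_nat (Suc n choose c) * g c)
       = (\<Sum>c\<le>n. (-1)^c * of_nat (n choose c) * (g c - g (Suc c)))"
proof -
  have pascal: "of_nat (Suc n choose c) =
      of_nat (n choose c) + (if c = 0 then 0 else of_nat (n choose (c - 1)) :: 'a)" for c
    by (cases c) auto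
  have "(\<Sum>c\<le>Suc n. (-1)^c * of_nat (Suc n choose c) * g c)
     = (\<Sum>c\<le>Suc n. (-1)^c * of_nat (n choose c) * g c)
       + (\<Sum>c\<le>Suc n. (-1)^c * (if c = 0 then 0 else of_nat (n choose (c - 1))) * g c)"
    unfolding pascal by (simp add: algebra_simps sum.distrib)
  also have "(\<Sum>c\<le>Suc n. (-1)^c * of_nat (n choose c) * g c)
      = (\<Sum>c\<le>n. (-1)^c * of_nat (n choose c) * g c)"
    by (simp add: binomial_eq_0)
  also have "(\<Sum>c\<le>Suc n. (-1)^c * (if c = 0 then 0 else of_nat (n choose (c - 1))) * g c)
      = (\<Sum>c\<le>n. (-1)^(Suc c) * of_nat (n choose c) * g (Suc c))"
    by (subst sum.atMost_Suc_shift) simp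
  finally show ?thesis
    by (simp add: sum.distrib[symmetric] sum_subtractf algebra_simps)
qed

lemma alternating_binomial_sum_power_eq_0:
  fixes a :: "'a::comm_ring_1"
  assumes "m < n"
  shows "(\<Sum>c\<le>n. (-1)^c * of_nat (n choose c) * (a + of_nat c)^m) = 0"
  using assms
proof (induction n arbitrary: m)
  case 0
  then show ?case by simp
next
  case (Suc n)
  have difference: "(a + of_nat c)^m - (a + of_nat (Suc c))^m
      = - (\<Sum>k<m. of_nat (m choose k) * (a + of_nat c)^k)" for c
  proof -
    have "(a + of_nat (Suc c))^m = ((a + of_nat c) + 1)^m"
      by (simp add: add_ac)
    also have "\<dots> = (\<Sum>k\<le>m. of_nat (m choose k) * (a + of_nat c)^k)"
      by (subst binomial_ring) simp
    also have "\<dots> = (\<Sum>k<m. of_nat (m choose k) * (a + of_nat c)^k) + (a + of_nat c)^m"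
      by (simp add: lessThan_Suc_atMost[symmetric])
    finally show ?thesis by simp
  qed
  have "(\<Sum>c\<le>Suc n. (-1)^c * of_nat (Suc n choose c) * (a + of_nat c)^m)
      = (\<Sum>c\<le>n. (-1)^c * of_nat (n choose c) * ((a + of_nat c)^m - (a + of_nat (Suc c))^m))"
    by (rule alternating_binomial_sum_Suc)
  also have "\<dots> = - (\<Sum>k<m. of_nat (m choose k)
                        * (\<Sum>c\<le>n. (-1)^c * of_nat (n choose c) * (a + of_nat c)^k))"
    unfolding difference
    by (simp add: sum_distrib_left sum_negf algebra_simps sum.swap[of _ "{..<m}"])
  also have "\<dots> = 0"
    using Suc by simp
  finally show ?case .
qed

definition shifted_power_mat :: "nat \<Rightarrow> nat \<Rightarrow> (nat \<Rightarrow> 'a) \<Rightarrow> (nat \<Rightarrow> 'a) \<Rightarrow> 'a::comm_ring_1 mat"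
  where "shifted_power_mat n m x y = mat n n (\<lambda>(i, j). (x i + y j) ^ m)"

lemma shifted_power_mat_carrier: "shifted_power_mat n m x y \<in> carrier_mat n n"
  by (simp add: shifted_power_mat_def)

lemma det_shifted_power_mat_eq_0:
  assumes "j < n" "j' < n" "j \<noteq> j'" "y j = y j'"
  shows "det (shifted_power_mat n m x y) = 0"
  by (rule det_identical_columns[OF shifted_power_mat_carrier assms(3,1,2)])
     (use assms in \<open>auto simp: shifted_power_mat_def\<close>)

lemma det_shifted_power_mat_column_difference:
  assumes j: "j < n" and m: "m < n"
  shows "(\<Sum>c\<le>n. (-1)^c * of_nat (n choose c) * det (shifted_power_mat n m x (y(j := a + of_nat c)))) = 0"
proof -
  define M where "M c = shifted_power_mat n m x (y(j := a + of_nat c))" for c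
  define C where "C i = cofactor (M 0) i j" for i
  have cofactor_M: "cofactor (M c) i j = C i" for c i
    unfolding C_def cofactor_def mat_delete_def M_def shifted_power_mat_def
    by (rule arg_cong[where f = "\<lambda>B. (-1)^(i + j) * det B"], rule eq_matI) auto
  have det_M: "det (M c) = (\<Sum>i<n. (x i + a + of_nat c) ^ m * C i)" for c
  proof -
    have "det (M c) = (\<Sum>i<n. M c $$ (i, j) * cofactor (M c) i j)"
      unfolding M_def by (rule laplace_expansion_column[OF shifted_power_mat_carrier j])
    also have "\<dots> = (\<Sum>i<n. M c $$ (i, j) * C i)"
      by (simp only: cofactor_M)
    also have "\<dots> = (\<Sum>i<n. (x i + a + of_nat c) ^ m * C i)"
      using j by (simp add: M_def shifted_power_mat_def add.assoc)
    finally show ?thesis .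
  qed
  have "(\<Sum>c\<le>n. (-1)^c * of_nat (n choose c) * det (M c))
      = (\<Sum>i<n. C i * (\<Sum>c\<le>n. (-1)^c * of_nat (n choose c) * (x i + a + of_nat c) ^ m))"
    unfolding det_M by (simp add: sum_distrib_left sum.swap[of _ "{..<n}"] algebra_simps)
  also have "\<dots> = 0"
    using m by (simp add: alternating_binomial_sum_power_eq_0)
  finally show ?thesis
    unfolding M_def .
qed

lemma A_mat_eq_shifted_power_mat:
  "A_mat l \<kappa> = shifted_power_mat l (l - 1) (\<lambda>i. real (i * (l + 1))) (\<lambda>j. real (col_shift \<kappa> (Suc j)))"
  by (rule eq_matI) (auto simp: A_mat_def shifted_power_mat_def)

lemma col_shift_Suc: "col_shift (Suc \<kappa>) = (col_shift \<kappa>)(\<kappa> := \<kappa>)"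
  by (rule ext) (simp add: col_shift_def, arith)

lemma col_shift_self: "1 \<le> \<kappa> \<Longrightarrow> col_shift \<kappa> \<kappa> = Suc \<kappa>"
  by (simp add: col_shift_def)

lemma ex_col_shift_eq:
  assumes "\<kappa> \<in> {1..l + 1}" "v \<in> {1..l + 1}" "v \<noteq> \<kappa>"
  shows "\<exists>j<l. col_shift \<kappa> (Suc j) = v"
proof (cases "v < \<kappa>")
  case True
  then show ?thesis
    using assms by (intro exI[of _ "v - 1"]) (auto simp: col_shift_def)
next
  case False
  then show ?thesis
    using assms by (intro exI[of _ "v - 2"]) (auto simp: col_shift_def)
qed

lemma det_A_mat_Suc:
  assumes "1 \<le> \<kappa>" "\<kappa> \<le> l"
  shows "real (l choose (\<kappa> - 1)) * det (A_mat l (Suc \<kappa>)) = real (l choose \<kappa>) * det (A_mat l \<kappa>)"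
proof -
  define x where "x = (\<lambda>i. real (i * (l + 1)))"
  define y where "y = (\<lambda>j. real (col_shift \<kappa> (Suc j)))"
  define D where "D c = det (shifted_power_mat l (l - 1) x (y(\<kappa> - 1 := 1 + real c)))" for c
  have "(\<Sum>c\<le>l. (-1)^c * real (l choose c) * D c) = 0"
    unfolding D_def using assms by (intro det_shifted_power_mat_column_difference) auto
  moreover have "D c = 0" if "c \<le> l" "c \<noteq> \<kappa> - 1" "c \<noteq> \<kappa>" for c
  proof -
    have "Suc c \<noteq> \<kappa>"
      using assms(1) that(2) by linarith
    then have "\<exists>j<l. col_shift \<kappa> (Suc j) = Suc c"
      using assms that(1) by (intro ex_col_shift_eq) auto
    then obtain j where j: "j < l" "col_shift \<kappa> (Suc j) = Suc c"
      by blast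
    then have "j \<noteq> \<kappa> - 1"
      using assms that col_shift_self by auto
    then show ?thesis
      unfolding D_def using assms j
      by (intro det_shifted_power_mat_eq_0[of "\<kappa> - 1" _ j]) (auto simp: y_def)
  qed
  ultimately have "(\<Sum>c\<in>{\<kappa> - 1, \<kappa>}. (-1)^c * real (l choose c) * D c) = 0"
    by (subst sum.mono_neutral_left[of "{..l}"]) (use assms in auto)
  moreover have "D \<kappa> = det (A_mat l \<kappa>)"
  proof -
    have "y(\<kappa> - 1 := 1 + real \<kappa>) = y"
      using assms col_shift_self by (auto simp: y_def)
    then show ?thesis
      by (simp add: D_def A_mat_eq_shifted_power_mat x_def y_def)
  qed
  moreover have "D (\<kappa> - 1) = det (A_mat l (Suc \<kappa>))"
  proof -
    have "y(\<kappa> - 1 := 1 + real (\<kappa> - 1)) = (\<lambda>j. real (col_shift (Suc \<kappa>) (Suc j)))"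
      using assms by (auto simp: y_def col_shift_Suc fun_eq_iff)
    then show ?thesis
      by (simp add: D_def A_mat_eq_shifted_power_mat x_def)
  qed
  moreover have "(-1::real)^\<kappa> = - ((-1)^(\<kappa> - 1))"
    using assms by (cases \<kappa>) auto
  ultimately show ?thesis
    using assms by (simp add: algebra_simps)
qed

lemma det_A_mat_eq_binomial:
  assumes "1 \<le> \<kappa>" "\<kappa> \<le> l + 1"
  shows "det (A_mat l \<kappa>) = real (l choose (\<kappa> - 1)) * det (A_mat l 1)"
  using assms
proof (induction \<kappa> rule: nat_induct_at_least)
  case base
  then show ?case by simp
next
  case (Suc \<kappa>)
  have "real (l choose (\<kappa> - 1)) * det (A_mat l (Suc \<kappa>))
      = real (l choose (\<kappa> - 1)) * (real (l choose \<kappa>) * det (A_mat l 1))"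
    using det_A_mat_Suc[of \<kappa> l] Suc by simp
  moreover have "real (l choose (\<kappa> - 1)) \<noteq> 0"
    using Suc by simp
  ultimately show ?case
    by simp
qed

theorem proposition3:
  fixes l :: nat
  assumes "l \<ge> 1"
  shows "\<exists>\<sigma> :: real. \<forall>\<kappa> \<in> {1..l+1}.
           det (A_mat l \<kappa>) = (-1) ^ l * \<sigma> * real (l choose (\<kappa> - 1))"
proof (intro exI ballI)
  fix \<kappa> :: nat
  assume "\<kappa> \<in> {1..l+1}"
  then have "det (A_mat l \<kappa>) = real (l choose (\<kappa> - 1)) * det (A_mat l 1)"
    by (intro det_A_mat_eq_binomial) auto
  then show "det (A_mat l \<kappa>) = (-1) ^ l * ((-1) ^ l * det (A_mat l 1)) * real (l choose (\<kappa> - 1))"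
    by (simp flip: power_add)
qed

end
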